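(* Let $(e,f)$ be an edge of $\Sigma$ contained in the two triangles $\sigma=(e,f,g)$ and $\sigma'=(e,f,g')$, and suppose $(e,f)$ is carved out by the ratio $m:m'$ with $m,m'$ coprime monomials in $R$, labelled so that $g(m'/m)>0$. Let $\Gamma_\sigma=\{r_\chi\}_{\chi\in G^\vee}$ and $\Gamma_{\sigma'}=\{r'_\chi\}_{\chi\in G^\vee}$ be the $G$-graphs of the charts $A_\sigma$, $A_{\sigma'}$. If $r_\chi\neq r'_\chi$ for some $\chi\in G^\vee$, then $m\mid r_\chi$ and $m'\mid r'_\chi$.
   Context: $G\subset SL_3(\mathbb{C})$ finite abelian, $R=\mathbb{C}[x,y,z]$; $Y=G\text{-Hilb}(\mathbb{C}^3)$ with universal family $\mathcal{M}$ normalised so that $\mathcal{M}^G\cong\mathcal{O}_Y$ (viewing $\mathcal{M}$ as a sheaf of $(R\rtimes G)\otimes\mathcal{O}_Y$-modules on $Y$). Laurent monomials $x^{m_1}y^{m_2}z^{m_3}$ are identified with $(m_1,m_2,m_3)\in\mathbb{Z}^3$; $M$ is the sublattice of $G$-invariant Laurent monomials and $L\subset\mathbb{Q}^3$ its dual lattice, with pairing $e(m)=\sum e_im_i$; for $e\in L$ and a Laurent monomial $m$, $e(m)$ equals the ($\mathbb{Q}$-)valuation of $m$ along the toric divisor $E_e$. $Y$ is the toric variety given by a triangulation $\Sigma$ of the junior simplex $\Delta=\{e\in\mathbb{R}^3_{\ge0}:\sum e_i=1\}$ with vertices $L\cap\Delta$; a triangle $\sigma$ of $\Sigma$ gives an affine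 toric chart $A_\sigma\cong\mathbb{C}^3$ with torus fixed point $E_\sigma$. An edge $(e,f)$ of $\Sigma$ is carved out by $m:m'$ if $m,m'$ are coprime monomials in $R$ with $m/m'$ generating the rank-one sublattice of $M$ orthogonal to $e$ and $f$. There is a unique embedding of $\mathcal{M}$ as $(R\rtimes G)\otimes\mathcal{O}_Y$-modules into the constant sheaf $\mathbb{C}(x,y,z)$ restricting to the identity on $\mathcal{O}_Y=\mathcal{M}^G$; under it, for each $\chi\in G^\vee$ the isotypic summand of $\mathcal{M}$ of character $\chi$ is, on each chart $A_\sigma$, generated as an $\mathcal{O}_Y$-module by a unique monomial $r_\chi$ of character $\chi$. The set $\Gamma_\sigma=\{r_\chi\}_{\chi\in G^\vee}$ is the $G$-graph of $A_\sigma$; it is exactly the set of monomials of $R$ not lying in the ideal of the $G$-cluster parametrised by $E_\sigma$. *)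

theory Defs
  imports "HOL-Analysis.Analysis"
begin

text \<open>G is a finite abelian subgroup of SL_3(C), acting diagonally on x,y,z
(coordinates in which the monomials are eigenvectors); an element is recorded
by its diagonal entries, a vector in complex^3.\<close>

definition gmul :: "complex^3 \<Rightarrow> complex^3 \<Rightarrow> complex^3" where
  "gmul g h = (\<chi> i. g $ i * h $ i)"

definition diag_SL3_group :: "(complex^3) set \<Rightarrow> bool" where
  "diag_SL3_group G \<longleftrightarrow> finite G \<and> vec 1 \<in> G
     \<and> (\<forall>g\<in>G. \<forall>h\<in>G. gmul g h \<in> G)
     \<and> (\<forall>g\<in>G. (\<Prod>i\<in>UNIV. g $ i) = 1)"

definition Gdual :: "(complex^3) set \<Rightarrow> (complex^3 \<Rightarrow> complex) set" where
  "Gdual G = {c. (\<forall>g\<in>G. \<forall>h\<in>G. c (gmul g h) = c g * c h)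
                 \<and> (\<forall>g\<in>G. c g \<noteq> 0) \<and> (\<forall>g. g \<notin> G \<longrightarrow> c g = 0)}"

text \<open>Laurent monomial x^n1 y^n2 z^n3 is identified with n :: int^3; its character.\<close>
definition char_of :: "(complex^3) set \<Rightarrow> int^3 \<Rightarrow> (complex^3 \<Rightarrow> complex)" where
  "char_of G n = (\<lambda>g. if g \<in> G then (\<Prod>i\<in>UNIV. (g $ i) powi (n $ i)) else 0)"

text \<open>Monomials of R = C[x,y,z]: nonnegative exponents.\<close>
definition inR :: "int^3 \<Rightarrow> bool" where
  "inR n \<longleftrightarrow> (\<forall>i. 0 \<le> n $ i)"

definition mdvd :: "int^3 \<Rightarrow> int^3 \<Rightarrow> bool" where
  "mdvd m r \<longleftrightarrow> (\<forall>i. m $ i \<le> r $ i)"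

definition mcoprime :: "int^3 \<Rightarrow> int^3 \<Rightarrow> bool" where
  "mcoprime m m' \<longleftrightarrow> (\<forall>i. m $ i = 0 \<or> m' $ i = 0)"

definition Mlat :: "(complex^3) set \<Rightarrow> (int^3) set" where
  "Mlat G = {n. char_of G n = char_of G 0}"

definition pairing :: "rat^3 \<Rightarrow> int^3 \<Rightarrow> rat" where
  "pairing e n = (\<Sum>i\<in>UNIV. e $ i * of_int (n $ i))"

definition Llat :: "(complex^3) set \<Rightarrow> (rat^3) set" where
  "Llat G = {e. \<forall>n\<in>Mlat G. pairing e n \<in> \<int>}"

definition junior :: "(rat^3) set" where
  "junior = {e. (\<forall>i. 0 \<le> e $ i) \<and> (\<Sum>i\<in>UNIV. e $ i) = 1}"

definition lin_indep3 :: "rat^3 \<Rightarrow> rat^3 \<Rightarrow> rat^3 \<Rightarrow> bool" where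
  "lin_indep3 e f g \<longleftrightarrow> (\<forall>a b c. (\<forall>i. a * e $ i + b * f $ i + c * g $ i = 0)
                                   \<longrightarrow> a = 0 \<and> b = 0 \<and> c = 0)"

text \<open>r is the generator r_chi of the chi-isotypic summand of the universal family
on the chart of the triangle (e,f,g): a monomial of R of character chi with
v(r) \<le> v(n) for every monomial n of R of character chi and every vertex v.\<close>
definition is_rchi :: "(complex^3) set \<Rightarrow> rat^3 \<Rightarrow> rat^3 \<Rightarrow> rat^3
                        \<Rightarrow> (complex^3 \<Rightarrow> complex) \<Rightarrow> int^3 \<Rightarrow> bool" where
  "is_rchi G e f g c r \<longleftrightarrow> inR r \<and> char_of G r = c
     \<and> (\<forall>n. inR n \<and> char_of G n = c \<longrightarrow>
            pairing e r \<le> pairing e n \<and> pairing f r \<le> pairing f n \<and> pairing g r \<le> pairing g n)"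

text \<open>Triangles of the triangulation Sigma of G-Hilb: nondegenerate lattice triangles
in the junior simplex whose chart carries a generator r_chi for every chi.\<close>
definition GHilb_triangle :: "(complex^3) set \<Rightarrow> rat^3 \<Rightarrow> rat^3 \<Rightarrow> rat^3 \<Rightarrow> bool" where
  "GHilb_triangle G e f g \<longleftrightarrow> e \<in> Llat G \<inter> junior \<and> f \<in> Llat G \<inter> junior
     \<and> g \<in> Llat G \<inter> junior \<and> lin_indep3 e f g
     \<and> (\<forall>c\<in>Gdual G. \<exists>r. is_rchi G e f g c r)"

definition carved_out :: "(complex^3) set \<Rightarrow> rat^3 \<Rightarrow> rat^3 \<Rightarrow> int^3 \<Rightarrow> int^3 \<Rightarrow> bool" where
  "carved_out G e f m m' \<longleftrightarrow> inR m \<and> inR m' \<and> mcoprime m m'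
     \<and> m - m' \<in> Mlat G \<and> pairing e (m - m') = 0 \<and> pairing f (m - m') = 0
     \<and> (\<forall>n\<in>Mlat G. pairing e n = 0 \<and> pairing f n = 0 \<longrightarrow> (\<exists>k::int. n = of_int k * (m - m')))"

end

theory Submission
  imports Defs
begin

text \<open>Both r and r' have character \<chi> and minimise the valuations along E_e and E_f,
so r/r' is a G-invariant Laurent monomial orthogonal to e and f, i.e. r/r' = (m/m')^k.
Minimality of r along E_g gives k g(m/m') = g(r/r') \<le> 0, while g(m/m') < 0, so
k \<ge> 0, and r \<noteq> r' excludes k = 0. Since m and m' have disjoint supports, the exponent
identity r = r' + k(m - m') then shows m | r and m' | r' coordinatewise.\<close>

lemma of_int_index: "(of_int k :: 'a::ring_1 ^ 'n) $ i = of_int k"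
proof (cases k rule: int_cases)
  case (nonneg n)
  then show ?thesis by (metis of_int_of_nat_eq of_nat_index)
next
  case (neg n)
  then show ?thesis by (metis of_int_minus of_int_of_nat_eq of_nat_index vector_uminus_component)
qed

lemma pairing_diff: "pairing e (a - b) = pairing e a - pairing e b"
  unfolding pairing_def by (simp add: algebra_simps sum_subtractf)

lemma pairing_scale: "pairing e (of_int k * a) = of_int k * pairing e a"
  unfolding pairing_def by (simp add: of_int_index algebra_simps sum_distrib_left)

lemma diag_SL3_group_nonzero:
  assumes "diag_SL3_group G" and "h \<in> G"
  shows "h $ i \<noteq> 0"
proof
  assume "h $ i = 0"
  then have "(\<Prod>i\<in>UNIV. h $ i) = 0" by (intro prod_zero) auto
  with assms show False unfolding diag_SL3_group_def by auto
qed

lemma char_of_add: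
  assumes "diag_SL3_group G"
  shows "char_of G (a + b) h = char_of G a h * char_of G b h"
  using diag_SL3_group_nonzero[OF assms]
  by (auto simp: char_of_def power_int_add prod.distrib)

lemma char_of_nonzero:
  assumes "diag_SL3_group G" and "h \<in> G"
  shows "char_of G a h \<noteq> 0"
  using diag_SL3_group_nonzero[OF assms] assms(2) by (simp add: char_of_def)

lemma diff_in_Mlat_if_same_char:
  assumes G: "diag_SL3_group G" and eq: "char_of G r = char_of G r'"
  shows "r - r' \<in> Mlat G"
proof -
  have "char_of G (r - r') h = char_of G 0 h" for h
  proof (cases "h \<in> G")
    case True
    have "char_of G r' h = char_of G (r - r') h * char_of G r' h"
      using char_of_add[OF G, of "r - r'" r' h] eq by simp
    then have "char_of G (r - r') h = 1"
      using char_of_nonzero[OF G True] by (metis mult_cancel_right2)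
    then show ?thesis using True by (simp add: char_of_def)
  next
    case False
    then show ?thesis by (simp add: char_of_def)
  qed
  then show ?thesis unfolding Mlat_def by auto
qed

lemma mdvd_if_diff_positive_multiple:
  assumes "inR r" "inR r'" "inR m" "inR m'" "mcoprime m m'"
    and diff: "r - r' = of_int k * (m - m')" and "k \<ge> 1"
  shows "mdvd m r \<and> mdvd m' r'"
proof -
  have "m $ i \<le> r $ i \<and> m' $ i \<le> r' $ i" for i
  proof -
    have ri: "r $ i = r' $ i + k * m $ i - k * m' $ i"
      using arg_cong[OF diff, of "\<lambda>v. v $ i"] by (simp add: of_int_index algebra_simps)
    have "m $ i = 0 \<or> m' $ i = 0" and "0 \<le> m $ i" "0 \<le> m' $ i" "0 \<le> r $ i" "0 \<le> r' $ i"
      using assms unfolding mcoprime_def inR_def by auto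
    moreover have "m $ i \<le> k * m $ i" "m' $ i \<le> k * m' $ i"
      using \<open>k \<ge> 1\<close> \<open>0 \<le> m $ i\<close> \<open>0 \<le> m' $ i\<close> by (simp_all add: mult_le_cancel_right1)
    ultimately show ?thesis using ri by auto
  qed
  then show ?thesis unfolding mdvd_def by auto
qed

theorem lemma2p1:
  fixes G :: "(complex^3) set" and e f g g' :: "rat^3" and m m' :: "int^3"
  assumes "diag_SL3_group G"
    and "GHilb_triangle G e f g" and "GHilb_triangle G e f g'" and "g \<noteq> g'"
    and "carved_out G e f m m'"
    and "pairing g (m' - m) > 0"
  shows "\<forall>c\<in>Gdual G. \<forall>r r'. is_rchi G e f g c r \<and> is_rchi G e f g' c r' \<and> r \<noteq> r'
           \<longrightarrow> mdvd m r \<and> mdvd m' r'"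
proof (intro ballI allI impI)
  fix c r r'
  assume H: "is_rchi G e f g c r \<and> is_rchi G e f g' c r' \<and> r \<noteq> r'"
  then have R: "inR r" "inR r'" "char_of G r = char_of G r'"
    and val: "pairing e r = pairing e r'" "pairing f r = pairing f r'"
             "pairing g r \<le> pairing g r'"
    unfolding is_rchi_def by (auto intro: order.antisym)
  have mm: "inR m" "inR m'" "mcoprime m m'" using assms(5) unfolding carved_out_def by auto
  have "pairing e (r - r') = 0" "pairing f (r - r') = 0"
    using val(1,2) by (simp_all add: pairing_diff)
  then obtain k :: int where k: "r - r' = of_int k * (m - m')"
    using assms(5) diff_in_Mlat_if_same_char[OF assms(1) R(3)]
    unfolding carved_out_def by blast
  have "of_int k * pairing g (m - m') \<le> 0"
    using val(3) arg_cong[OF k, of "pairing g"] by (simp add: pairing_diff pairing_scale)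
  moreover have "pairing g (m - m') < 0"
    using assms(6) by (simp add: pairing_diff)
  moreover have "k \<noteq> 0" using H k by auto
  ultimately have "k \<ge> 1"
    by (metis int_one_le_iff_zero_less linorder_not_less mult_neg_neg of_int_less_0_iff order_less_le)
  then show "mdvd m r \<and> mdvd m' r'"
    using mdvd_if_diff_positive_multiple[OF R(1,2) mm k] by simp
qed

end
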